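(* Let $\xi_0,\xi_1,\dots$ be nondegenerate i.i.d. complex random variables with $\mathbb{P}(\xi_0=0)=0$ and $\mathbb{E}\log(1+|\xi_0|)<\infty$, and let $K_n(z)=\sum_{k=0}^n\xi_kz^k$. Fix a positive integer $m$, let $N_n=n-m$ (so $D_n=m$ for all $n$), and let $\mu^K_{D_n}$ be the counting measure of zeros of $K_n^{(N_n)}$. Then $\frac{1}{m}\mu^K_{D_n}\to\delta_0$ in probability, and $$\mathcal{S}_n(\mu^K_{D_n})\to\mu_{f_m^K}\quad\text{in distribution},$$ where $\mu_{f_m^K}$ is the random counting measure of zeros of the random polynomial $f_m^K(z)=\sum_{k=0}^m\frac{\xi_k}{k!}z^k$.
   Context: For a polynomial $f$, $\mu_f=\sum_{z:\,f(z)=0}\delta_z$ is the counting measure of its zeros (with multiplicity). For $h>0$ and a measure $\nu$ on $\mathbb{C}$, $(\mathcal{S}_h\nu)(B)=\nu(B/h)$ for Borel $B$ (so $\mathcal{S}_n(\mu^K_{D_n})$ is the zero counting measure of $K_n^{(N_n)}(z/n)$). Convergence of random measures in probability (resp. in distribution) means that $\int\phi\,d\nu_n\to\int\phi\,d\nu$ in probability (resp. in distribution) for every smooth compactly supported test function $\phi$ on $\mathbb{C}$. *)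

theory Defs
  imports "HOL-Probability.Probability" "HOL-Computational_Algebra.Polynomial"
begin

fun pderivs :: "complex list \<Rightarrow> (complex \<Rightarrow> real) \<Rightarrow> complex \<Rightarrow> real" where
  "pderivs [] f = f"
| "pderivs (v # vs) f = (\<lambda>x. deriv (\<lambda>t::real. pderivs vs f (x + of_real t * v)) 0)"

definition smooth_fun :: "(complex \<Rightarrow> real) \<Rightarrow> bool" where
  "smooth_fun f \<longleftrightarrow>
     (\<forall>vs. set vs \<subseteq> {1, \<i>} \<longrightarrow>
        continuous_on UNIV (pderivs vs f) \<and>
        (\<forall>v\<in>{1, \<i>}. \<forall>x. (\<lambda>t::real. pderivs vs f (x + of_real t * v)) differentiable (at 0)))"

definition test_fun :: "(complex \<Rightarrow> real) \<Rightarrow> bool" where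
  "test_fun f \<longleftrightarrow> smooth_fun f \<and> compact (closure {z. f z \<noteq> 0})"

text \<open>Integral of phi against the zero counting measure (with multiplicity) of p.\<close>
definition zero_integral :: "complex poly \<Rightarrow> (complex \<Rightarrow> real) \<Rightarrow> real" where
  "zero_integral p \<phi> = (\<Sum>z | poly p z = 0. real (order z p) * \<phi> z)"

definition Kpoly :: "(nat \<Rightarrow> complex) \<Rightarrow> nat \<Rightarrow> complex poly" where
  "Kpoly a n = (\<Sum>k\<le>n. monom (a k) k)"

definition fpoly :: "(nat \<Rightarrow> complex) \<Rightarrow> nat \<Rightarrow> complex poly" where
  "fpoly a m = (\<Sum>k\<le>m. monom (a k / fact k) k)"

end

theory Submission
  imports Defs "HOL-Computational_Algebra.Fundamental_Theorem_Algebra"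
    "HOL-Real_Asymp.Real_Asymp"
begin

text \<open>With n = t + m and w = n z, the polynomial K_n^{(t)}(w/n) / t! has the coefficients
  \<xi>_{t+j} (t+j)! / (t! j! n^j), j \<le> m, and the deterministic factor tends to 1/j!. As the \<xi>_k are
  i.i.d., the vector (\<xi>_{t+j})_j has the same law as (\<xi>_j)_j, so the rescaled zero measure has the law
  of the zero measure of a polynomial whose coefficients converge almost surely to those of f_m.
  Because \<xi>_m \<noteq> 0 almost surely, its degree stays m, and the zeros of polynomials of fixed degree
  depend continuously on the coefficients; this gives the convergence in distribution. The test
  function \<phi>(w/n) converges continuously to the constant \<phi>(0), which gives the concentration at 0
  of the unscaled zeros.\<close>

section \<open>Integrals against zero counting measures\<close>

lemma sum_mset_eq_sum_count:
  "(\<Sum>x\<in>#A. f x) = (\<Sum>x\<in>set_mset A. of_nat (count A x) * f x)"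
proof (induction A)
  case empty
  then show ?case by simp
next
  case (add a A)
  have "(\<Sum>x\<in>set_mset (add_mset a A). of_nat (count (add_mset a A) x) * f x)
      = (\<Sum>x\<in>insert a (set_mset A). of_nat (count A x) * f x + (if x = a then f x else 0))"
    by (intro sum.cong) (auto simp: algebra_simps)
  also have "\<dots> = (\<Sum>x\<in>insert a (set_mset A). of_nat (count A x) * f x) + f a"
    by (simp add: sum.distrib)
  also have "(\<Sum>x\<in>insert a (set_mset A). of_nat (count A x) * f x)
      = (\<Sum>x\<in>set_mset A. of_nat (count A x) * f x)"
    by (cases "a \<in> set_mset A") (auto simp: not_in_iff insert_absorb)
  finally show ?case using add by (simp add: add.commute)
qed

lemma zero_integral_0 [simp]: "zero_integral 0 \<psi> = 0"
  by (simp add: zero_integral_def infinite_UNIV_char_0)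

lemma zero_integral_eq_sum_proots: "p \<noteq> 0 \<Longrightarrow> zero_integral p \<psi> = (\<Sum>x\<in>#proots p. \<psi> x)"
  by (simp add: zero_integral_def sum_mset_eq_sum_count)

lemma zero_integral_degree_0: "degree p = 0 \<Longrightarrow> zero_integral p \<psi> = 0"
  by (cases "p = 0") (auto simp: zero_integral_def infinite_UNIV_char_0 elim!: degree_eq_zeroE)

lemma zero_integral_smult: "c \<noteq> 0 \<Longrightarrow> zero_integral (smult c p) \<psi> = zero_integral p \<psi>"
  by (cases "p = 0") (simp_all add: zero_integral_eq_sum_proots)

lemma zero_integral_linear_factor:
  assumes "q \<noteq> 0"
  shows "zero_integral ([:-r, 1:] * q) \<psi> = \<psi> r + zero_integral q \<psi>"
proof -
  have l: "[:-r, 1:] \<noteq> (0::complex poly)" by simp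
  then have "proots ([:-r, 1:] * q) = {#r#} + proots q"
    using proots_mult[OF l assms] proots_linear_factor[of "-r"] by simp
  moreover have "[:-r, 1:] * q \<noteq> 0" using l assms by (metis mult_eq_0_iff)
  ultimately show ?thesis using assms by (simp add: zero_integral_eq_sum_proots)
qed

lemma zero_integral_synthetic_div:
  assumes "poly p r = 0" "p \<noteq> 0"
  shows "zero_integral p \<psi> = \<psi> r + zero_integral (synthetic_div p r) \<psi>"
proof -
  have p: "p = [:-r, 1:] * synthetic_div p r"
    using synthetic_div_correct'[of r p] assms(1) by simp
  then have "synthetic_div p r \<noteq> 0" using assms(2) by auto
  then show ?thesis by (subst p) (rule zero_integral_linear_factor)
qed

lemma zero_integral_smult_prod_linear_factors:
  fixes d :: nat
  shows "a \<noteq> 0 \<Longrightarrow> zero_integral (smult a (\<Prod>i<d. [:-r i, 1:])) \<psi> = (\<Sum>i<d. \<psi> (r i))"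
proof (induction d)
  case 0
  then show ?case by (simp add: zero_integral_degree_0)
next
  case (Suc d)
  have "smult a (\<Prod>i<d. [:-r i, 1:]) \<noteq> 0" using Suc.prems by (simp add: prod_zero_iff)
  then show ?case
    using zero_integral_linear_factor[of "smult a (\<Prod>i<d. [:-r i, 1:])" "r d" \<psi>] Suc
    by (simp add: mult_smult_right mult.commute)
qed

lemma zero_integral_const: "p \<noteq> 0 \<Longrightarrow> zero_integral p (\<lambda>_. c) = real (degree p) * c"
proof -
  assume "p \<noteq> 0"
  obtain r where "smult (lead_coeff p) (\<Prod>i<degree p. [:-r i, 1:]) = p"
    using complex_poly_decompose' by blast
  then show ?thesis
    using zero_integral_smult_prod_linear_factors[where a="lead_coeff p" and d="degree p" and r=r and \<psi>="\<lambda>_. c"] \<open>p \<noteq> 0\<close>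
    by simp
qed

lemma zero_integral_pcompose_scale:
  assumes "c \<noteq> 0"
  shows "zero_integral (pcompose p [:0, c:]) \<psi> = zero_integral p (\<lambda>z. \<psi> (z / c))"
proof (cases "p = 0")
  case False
  obtain r where r: "smult (lead_coeff p) (\<Prod>i<degree p. [:-r i, 1:]) = p"
    using complex_poly_decompose' by blast
  have "pcompose [:-r i, 1:] [:0, c:] = smult c [:-(r i / c), 1:]" for i
    using assms by (simp add: pcompose_pCons)
  then have "pcompose p [:0, c:]
      = smult (lead_coeff p * c ^ degree p) (\<Prod>i<degree p. [:-(r i / c), 1:])"
    by (subst r[symmetric]) (simp only: pcompose_smult pcompose_prod prod_smult smult_smult prod_constant card_lessThan)
  then have "zero_integral (pcompose p [:0, c:]) \<psi> = (\<Sum>i<degree p. \<psi> (r i / c))"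
    using False assms by (simp add: zero_integral_smult_prod_linear_factors)
  also have "\<dots> = zero_integral p (\<lambda>z. \<psi> (z / c))"
    using zero_integral_smult_prod_linear_factors[where a="lead_coeff p" and d="degree p" and r=r] r False by simp
  finally show ?thesis .
qed simp

section \<open>Continuous dependence of the zeros on the coefficients\<close>

lemma tendsto_subseq_subseqI:
  fixes x :: "nat \<Rightarrow> 'a::metric_space"
  assumes "\<And>\<sigma>::nat \<Rightarrow> nat. strict_mono \<sigma> \<Longrightarrow> \<exists>\<sigma>'. strict_mono \<sigma>' \<and> (x \<circ> \<sigma> \<circ> \<sigma>') \<longlonglongrightarrow> L"
  shows "x \<longlonglongrightarrow> L"
proof (rule ccontr)
  assume "\<not> x \<longlonglongrightarrow> L"
  then obtain e where e: "e > 0" "\<not> eventually (\<lambda>n. dist (x n) L < e) sequentially"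
    unfolding tendsto_iff by blast
  then have inf: "infinite {n. \<not> dist (x n) L < e}"
    by (simp add: not_eventually frequently_cofinite[symmetric] cofinite_eq_sequentially)
  define \<sigma> where "\<sigma> = enumerate {n. \<not> dist (x n) L < e}"
  have "strict_mono \<sigma>" unfolding \<sigma>_def using inf by (rule strict_mono_enumerate)
  then obtain \<sigma>' where "(x \<circ> \<sigma> \<circ> \<sigma>') \<longlonglongrightarrow> L" using assms by metis
  then obtain n where "dist (x (\<sigma> (\<sigma>' n))) L < e"
    using e(1) unfolding tendsto_iff o_def by (meson eventually_sequentially order.refl)
  then show False using enumerate_in_set[OF inf] unfolding \<sigma>_def by blast
qed

lemma tendsto_poly_of_tendsto_coeffs:
  fixes p :: "nat \<Rightarrow> 'a::real_normed_field poly"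
  assumes "\<And>k. (\<lambda>n. coeff (p n) k) \<longlonglongrightarrow> coeff q k" "\<And>n. degree (p n) \<le> D" "degree q \<le> D"
    "z \<longlonglongrightarrow> w"
  shows "(\<lambda>n. poly (p n) (z n)) \<longlonglongrightarrow> poly q w"
proof -
  have poly_eq: "poly p' x = (\<Sum>i\<le>D. coeff p' i * x ^ i)" if "degree p' \<le> D" for p' :: "'a poly" and x
    unfolding poly_altdef using that by (intro sum.mono_neutral_left) (auto simp: coeff_eq_0)
  have "(\<lambda>n. \<Sum>i\<le>D. coeff (p n) i * z n ^ i) \<longlonglongrightarrow> (\<Sum>i\<le>D. coeff q i * w ^ i)"
    by (intro tendsto_intros assms)
  then show ?thesis using assms(2,3) by (simp add: poly_eq)
qed

lemma norm_root_le_Cauchy_bound: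
  fixes p :: "complex poly"
  assumes "poly p r = 0" "degree p = Suc d"
  shows "norm r \<le> 1 + (\<Sum>k\<le>d. norm (coeff p k)) / norm (lead_coeff p)"
proof (cases "norm r \<le> 1")
  case True
  have "0 \<le> (\<Sum>k\<le>d. norm (coeff p k)) / norm (lead_coeff p)" by (simp add: sum_nonneg)
  then show ?thesis using True by linarith
next
  case False
  have "p \<noteq> 0" using assms(2) by auto
  then have lc: "norm (lead_coeff p) > 0" by simp
  have "0 = (\<Sum>i\<le>Suc d. coeff p i * r ^ i)" using assms poly_altdef[of p r] by simp
  then have "lead_coeff p * r ^ Suc d = - (\<Sum>i\<le>d. coeff p i * r ^ i)"
    using assms(2) by (simp add: add_eq_0_iff)
  then have "norm (lead_coeff p) * norm r ^ Suc d = norm (\<Sum>i\<le>d. coeff p i * r ^ i)"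
    by (metis norm_minus_cancel norm_mult norm_power)
  also have "\<dots> \<le> (\<Sum>i\<le>d. norm (coeff p i) * norm r ^ i)"
    by (rule order.trans[OF norm_sum]) (simp add: norm_mult norm_power)
  also have "\<dots> \<le> (\<Sum>i\<le>d. norm (coeff p i) * norm r ^ d)"
    using False by (intro sum_mono mult_left_mono power_increasing) auto
  also have "\<dots> = (\<Sum>i\<le>d. norm (coeff p i)) * norm r ^ d" by (simp add: sum_distrib_right)
  finally have "(norm (lead_coeff p) * norm r) * norm r ^ d \<le> (\<Sum>i\<le>d. norm (coeff p i)) * norm r ^ d"
    by (simp add: mult.assoc)
  moreover have "0 < norm r ^ d" using False by (intro zero_less_power) linarith
  ultimately have "norm (lead_coeff p) * norm r \<le> (\<Sum>i\<le>d. norm (coeff p i))"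
    by (simp add: mult_le_cancel_right)
  then have "norm r \<le> (\<Sum>k\<le>d. norm (coeff p k)) / norm (lead_coeff p)"
    using lc by (simp add: field_simps)
  then show ?thesis by linarith
qed

lemma bounded_roots_of_tendsto_coeffs:
  fixes p :: "nat \<Rightarrow> complex poly"
  assumes "\<And>n. degree (p n) = Suc d" "degree q = Suc d" "\<And>k. (\<lambda>n. coeff (p n) k) \<longlonglongrightarrow> coeff q k"
    and "\<And>n. poly (p n) (r n) = 0"
  shows "bounded (range r)"
proof -
  have "q \<noteq> 0" using assms(2) by auto
  then have lc: "norm (lead_coeff q) \<noteq> 0" by simp
  define B where "B = (\<lambda>n. 1 + (\<Sum>k\<le>d. norm (coeff (p n) k)) / norm (lead_coeff (p n)))"
  have lead: "(\<lambda>n. lead_coeff (p n)) \<longlonglongrightarrow> lead_coeff q"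
    using assms(1,2) assms(3)[of "Suc d"] by simp
  have "B \<longlonglongrightarrow> 1 + (\<Sum>k\<le>d. norm (coeff q k)) / norm (lead_coeff q)"
    unfolding B_def by (intro tendsto_intros assms(3) lead lc)
  then have "bounded (range B)" by (rule convergent_imp_bounded)
  then obtain a where a: "\<And>n. norm (B n) \<le> a" unfolding bounded_iff by blast
  have rB: "norm (r n) \<le> B n" for n
    unfolding B_def by (rule norm_root_le_Cauchy_bound[OF assms(4,1)])
  have "norm (r n) \<le> a" for n
    using rB[of n] a[of n] abs_ge_self[of "B n"] unfolding real_norm_def by linarith
  then show ?thesis unfolding bounded_iff by blast
qed

lemma coeff_synthetic_div:
  "coeff (synthetic_div p c) k = coeff p (Suc k) + c * coeff (synthetic_div p c) (Suc k)"
  using arg_cong[OF synthetic_div_correct[of p c], of "\<lambda>q. coeff q (Suc k)"] by simp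

lemma tendsto_coeff_synthetic_div:
  fixes p :: "nat \<Rightarrow> 'a::real_normed_field poly"
  assumes "\<And>k. (\<lambda>n. coeff (p n) k) \<longlonglongrightarrow> coeff q k" "\<And>n. degree (p n) \<le> D" "degree q \<le> D"
    and "r \<longlonglongrightarrow> s"
  shows "(\<lambda>n. coeff (synthetic_div (p n) (r n)) k) \<longlonglongrightarrow> coeff (synthetic_div q s) k"
proof -
  have high: "coeff (synthetic_div p' c) k = 0" if "degree p' \<le> D" "D \<le> k" for p' :: "'a poly" and c k
  proof (cases "degree p' = 0")
    case True
    then show ?thesis by (simp add: synthetic_div_eq_0_iff[THEN iffD2])
  next
    case False
    then show ?thesis using that by (intro coeff_eq_0) (simp add: degree_synthetic_div)
  qed
  show ?thesis
  proof (cases "D \<le> k")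
    case True
    then show ?thesis using assms(2,3) by (simp add: high)
  next
    case False
    then have "k \<le> D" by simp
    then show ?thesis
    proof (induction k rule: inc_induct)
      case base
      then show ?case using assms(2,3) by (simp add: high)
    next
      case (step k)
      then show ?case
        by (subst (1 2) coeff_synthetic_div) (intro tendsto_add tendsto_mult assms(1,4) step(3))
    qed
  qed
qed

text \<open>Continuous convergence, required along every subsequence so that it passes to subsequences.\<close>

definition continuous_convergence :: "(nat \<Rightarrow> 'a::topological_space \<Rightarrow> 'b::topological_space) \<Rightarrow> ('a \<Rightarrow> 'b) \<Rightarrow> bool"
  where "continuous_convergence \<psi> \<psi>0 \<longleftrightarrow>
    (\<forall>\<sigma> z w. strict_mono (\<sigma>::nat \<Rightarrow> nat) \<longrightarrow> z \<longlonglongrightarrow> w \<longrightarrow> (\<lambda>n. \<psi> (\<sigma> n) (z n)) \<longlonglongrightarrow> \<psi>0 w)"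

lemma continuous_convergenceD:
  assumes "continuous_convergence \<psi> \<psi>0" "z \<longlonglongrightarrow> w"
  shows "(\<lambda>n. \<psi> n (z n)) \<longlonglongrightarrow> \<psi>0 w"
  using assms(1)[unfolded continuous_convergence_def, rule_format, OF strict_mono_id assms(2)] by simp

lemma continuous_convergence_subseq:
  assumes "continuous_convergence \<psi> \<psi>0" "strict_mono \<sigma>"
  shows "continuous_convergence (\<lambda>n. \<psi> (\<sigma> n)) \<psi>0"
  unfolding continuous_convergence_def
proof (intro allI impI)
  fix \<sigma>' :: "nat \<Rightarrow> nat" and z :: "nat \<Rightarrow> 'a" and w
  assume "strict_mono \<sigma>'" "z \<longlonglongrightarrow> w"
  then show "(\<lambda>n. \<psi> (\<sigma> (\<sigma>' n)) (z n)) \<longlonglongrightarrow> \<psi>0 w"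
    using assms(1)[unfolded continuous_convergence_def, rule_format, OF strict_mono_o[OF assms(2)]]
    by (simp add: o_def)
qed

lemma continuous_convergence_const:
  assumes "continuous_on UNIV \<psi>"
  shows "continuous_convergence (\<lambda>_. \<psi>) \<psi>"
  unfolding continuous_convergence_def
proof (intro allI impI)
  fix \<sigma> :: "nat \<Rightarrow> nat" and z :: "nat \<Rightarrow> 'a" and w
  assume z: "z \<longlonglongrightarrow> w"
  show "(\<lambda>n. \<psi> (z n)) \<longlonglongrightarrow> \<psi> w" by (rule continuous_on_tendsto_compose[OF assms z]) auto
qed

lemma convergent_roots_subseq:
  fixes p :: "nat \<Rightarrow> complex poly"
  assumes "\<And>n. degree (p n) = Suc d" "degree q = Suc d" "\<And>k. (\<lambda>n. coeff (p n) k) \<longlonglongrightarrow> coeff q k"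
  obtains \<tau> r s where "strict_mono \<tau>" "\<And>n. poly (p (\<tau> n)) (r n) = 0" "r \<longlonglongrightarrow> s" "poly q s = 0"
proof -
  have "\<exists>z. poly (p n) z = 0" for n
    using assms(1)[of n] by (intro fundamental_theorem_of_algebra) (simp add: constant_degree)
  then obtain r where r: "\<And>n. poly (p n) (r n) = 0" by metis
  have "bounded (range r)" using assms r by (rule bounded_roots_of_tendsto_coeffs)
  then obtain s \<tau> where \<tau>: "strict_mono \<tau>" "(r \<circ> \<tau>) \<longlonglongrightarrow> s"
    using bounded_imp_convergent_subsequence by blast
  have "(\<lambda>n. coeff (p (\<tau> n)) k) \<longlonglongrightarrow> coeff q k" for k
    using LIMSEQ_subseq_LIMSEQ[OF assms(3) \<tau>(1)] by (simp add: o_def)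
  then have "(\<lambda>n. poly (p (\<tau> n)) (r (\<tau> n))) \<longlonglongrightarrow> poly q s"
    using assms(1,2) \<tau>(2) by (intro tendsto_poly_of_tendsto_coeffs[where D="Suc d"]) (auto simp: o_def)
  then have "poly q s = 0" using r by (simp add: LIMSEQ_const_iff)
  show ?thesis by (rule that[of \<tau> "r \<circ> \<tau>" s]) (use \<tau> r \<open>poly q s = 0\<close> in auto)
qed

text \<open>Peeling off one convergent root at a time: along a subsequence the zero integrals of the
  quotients converge by induction on the degree, and every subsequence has such a subsequence.\<close>

lemma tendsto_zero_integral:
  fixes p :: "nat \<Rightarrow> complex poly"
  assumes "\<And>n. degree (p n) = d" "degree q = d" "q \<noteq> 0"
    and "\<And>k. (\<lambda>n. coeff (p n) k) \<longlonglongrightarrow> coeff q k"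
    and "continuous_convergence \<psi> \<psi>0"
  shows "(\<lambda>n. zero_integral (p n) (\<psi> n)) \<longlonglongrightarrow> zero_integral q \<psi>0"
  using assms
proof (induction d arbitrary: p q \<psi>)
  case 0
  then show ?case by (simp add: zero_integral_degree_0)
next
  case (Suc d)
  show ?case
  proof (rule tendsto_subseq_subseqI)
    fix \<sigma> :: "nat \<Rightarrow> nat" assume \<sigma>: "strict_mono \<sigma>"
    have "(\<lambda>n. coeff (p (\<sigma> n)) k) \<longlonglongrightarrow> coeff q k" for k
      using LIMSEQ_subseq_LIMSEQ[OF Suc.prems(4) \<sigma>] by (simp add: o_def)
    then obtain \<tau> r s where \<tau>: "strict_mono \<tau>" and r: "\<And>n. poly (p (\<sigma> (\<tau> n))) (r n) = 0"
      and "r \<longlonglongrightarrow> s" "poly q s = 0"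
      using convergent_roots_subseq[of "\<lambda>n. p (\<sigma> n)" d q] Suc.prems(1,2) by blast
    define P where "P = (\<lambda>n. p (\<sigma> (\<tau> n)))"
    define \<Psi> where "\<Psi> = (\<lambda>n. \<psi> (\<sigma> (\<tau> n)))"
    have "strict_mono (\<sigma> \<circ> \<tau>)" using \<sigma> \<tau> by (rule strict_mono_o)
    then have coeff_P: "(\<lambda>n. coeff (P n) k) \<longlonglongrightarrow> coeff q k" for k
      using LIMSEQ_subseq_LIMSEQ[OF Suc.prems(4)] by (simp add: P_def o_def)
    have \<Psi>: "continuous_convergence \<Psi> \<psi>0"
      using continuous_convergence_subseq[OF Suc.prems(5) \<open>strict_mono (\<sigma> \<circ> \<tau>)\<close>]
      by (simp add: \<Psi>_def o_def)
    have "(\<lambda>n. zero_integral (synthetic_div (P n) (r n)) (\<Psi> n)) \<longlonglongrightarrow> zero_integral (synthetic_div q s) \<psi>0"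
    proof (rule Suc.IH)
      show "degree (synthetic_div (P n) (r n)) = d" for n
        using Suc.prems(1) by (simp add: P_def degree_synthetic_div)
      show "degree (synthetic_div q s) = d" using Suc.prems(2) by (simp add: degree_synthetic_div)
      then show "synthetic_div q s \<noteq> 0" using Suc.prems(2) by (auto simp: synthetic_div_eq_0_iff)
      show "(\<lambda>n. coeff (synthetic_div (P n) (r n)) k) \<longlonglongrightarrow> coeff (synthetic_div q s) k" for k
        using Suc.prems(1,2) \<open>r \<longlonglongrightarrow> s\<close>
        by (intro tendsto_coeff_synthetic_div[where D="Suc d"] coeff_P) (auto simp: P_def)
    qed (fact \<Psi>)
    moreover have "(\<lambda>n. \<Psi> n (r n)) \<longlonglongrightarrow> \<psi>0 s"
      using \<Psi> \<open>r \<longlonglongrightarrow> s\<close> by (rule continuous_convergenceD)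
    ultimately have "(\<lambda>n. \<Psi> n (r n) + zero_integral (synthetic_div (P n) (r n)) (\<Psi> n))
        \<longlonglongrightarrow> \<psi>0 s + zero_integral (synthetic_div q s) \<psi>0"
      by (intro tendsto_add)
    moreover have "zero_integral (P n) (\<Psi> n) = \<Psi> n (r n) + zero_integral (synthetic_div (P n) (r n)) (\<Psi> n)" for n
      using Suc.prems(1)[of "\<sigma> (\<tau> n)"] r by (intro zero_integral_synthetic_div) (auto simp: P_def)
    moreover have "zero_integral q \<psi>0 = \<psi>0 s + zero_integral (synthetic_div q s) \<psi>0"
      using \<open>poly q s = 0\<close> Suc.prems(3) by (rule zero_integral_synthetic_div)
    ultimately have "(\<lambda>n. zero_integral (P n) (\<Psi> n)) \<longlonglongrightarrow> zero_integral q \<psi>0"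
      by simp
    then show "\<exists>\<tau>. strict_mono \<tau> \<and> ((\<lambda>n. zero_integral (p n) (\<psi> n)) \<circ> \<sigma> \<circ> \<tau>) \<longlonglongrightarrow> zero_integral q \<psi>0"
      using \<tau> by (auto simp: P_def \<Psi>_def o_def)
  qed
qed

section \<open>Rescaled higher derivatives of K_n\<close>

lemma coeff_Kpoly: "coeff (Kpoly a n) k = (if k \<le> n then a k else 0)"
  by (simp add: Kpoly_def coeff_sum coeff_monom)

lemma degree_Kpoly_le: "degree (Kpoly a n) \<le> n"
  by (rule degree_le) (simp add: coeff_Kpoly)

lemma degree_Kpoly: "a n \<noteq> 0 \<Longrightarrow> degree (Kpoly a n) = n"
  by (intro antisym degree_Kpoly_le le_degree) (simp add: coeff_Kpoly)

lemma Kpoly_neq_0: "a n \<noteq> 0 \<Longrightarrow> Kpoly a n \<noteq> 0"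
  using coeff_Kpoly[of a n n] by auto

lemma fpoly_eq_Kpoly: "fpoly a m = Kpoly (\<lambda>k. a k / fact k) m"
  by (simp add: fpoly_def Kpoly_def)

lemma continuous_on_zero_integral_Kpoly:
  assumes "continuous_on UNIV \<psi>"
  shows "continuous_on {b. b m \<noteq> 0} (\<lambda>b. zero_integral (Kpoly b m) \<psi>)"
proof (rule continuous_on_sequentiallyI)
  fix u :: "nat \<Rightarrow> nat \<Rightarrow> complex" and b
  assume "\<forall>n. u n \<in> {b. b m \<noteq> 0}" "b \<in> {b. b m \<noteq> 0}" "u \<longlonglongrightarrow> b"
  moreover have "(\<lambda>n. u n k) \<longlonglongrightarrow> b k" for k
  proof -
    have "isCont (\<lambda>x::nat \<Rightarrow> complex. x k) b"
      by (metis UNIV_I continuous_on_eq_continuous_at continuous_on_product_coordinates open_UNIV)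
    then show ?thesis using \<open>u \<longlonglongrightarrow> b\<close> by (rule isCont_tendsto_compose)
  qed
  ultimately show "(\<lambda>n. zero_integral (Kpoly (u n) m) \<psi>) \<longlonglongrightarrow> zero_integral (Kpoly b m) \<psi>"
    using continuous_convergence_const[OF assms]
    by (intro tendsto_zero_integral[where d=m]) (auto simp: degree_Kpoly Kpoly_neq_0 coeff_Kpoly)
qed

lemma borel_measurable_zero_integral_Kpoly:
  assumes "continuous_on UNIV \<psi>"
  shows "(\<lambda>b. zero_integral (Kpoly b m) \<psi>) \<in> borel_measurable (borel :: (nat \<Rightarrow> complex) measure)"
proof (induction m)
  case 0
  then show ?case using degree_Kpoly_le[of _ 0] by (simp add: zero_integral_degree_0)
next
  case (Suc m)
  define A where "A = {b::nat \<Rightarrow> complex. b (Suc m) \<noteq> 0}"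
  have A: "A \<in> sets borel"
    unfolding A_def by (intro borel_open open_Collect_neq) (simp_all add: continuous_on_const)
  have split: "zero_integral (Kpoly b (Suc m)) \<psi> =
      indicator A b *\<^sub>R zero_integral (Kpoly b (Suc m)) \<psi> + indicator (-A) b *\<^sub>R zero_integral (Kpoly b m) \<psi>" for b
  proof (cases "b \<in> A")
    case False
    then have "Kpoly b (Suc m) = Kpoly b m"
      by (intro poly_eqI) (auto simp: coeff_Kpoly A_def le_Suc_eq)
    then show ?thesis using False by simp
  qed simp
  have "(\<lambda>b. indicator A b *\<^sub>R zero_integral (Kpoly b (Suc m)) \<psi>) \<in> borel_measurable borel"
    using A continuous_on_zero_integral_Kpoly[OF assms, of "Suc m"] unfolding A_def
    by (rule borel_measurable_continuous_on_indicator)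
  moreover have "(\<lambda>b. indicator (-A) b *\<^sub>R zero_integral (Kpoly b m) \<psi>) \<in> borel_measurable borel"
    using Suc.IH A by (intro borel_measurable_scaleR borel_measurable_indicator) auto
  ultimately show ?case by (subst split) (rule borel_measurable_add)
qed

lemma fact_add_eq_fact_mult_pochhammer: "fact (j + t) = fact j * pochhammer (of_nat (Suc j)) t"
  by (simp add: pochhammer_fact pochhammer_product' add.commute)

text \<open>The coefficient of w^j in (pderiv ^^ t) (Kpoly a (t + m)) evaluated at w / (t + m) and divided
  by t! is a (t + j) * scaled_deriv_coeff m t j.\<close>

definition scaled_deriv_coeff :: "nat \<Rightarrow> nat \<Rightarrow> nat \<Rightarrow> complex" where
  "scaled_deriv_coeff m t j = fact (t + j) / (fact t * fact j * of_nat (t + m) ^ j)"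

lemma zero_integral_higher_pderiv_Kpoly_rescale:
  "zero_integral ((pderiv ^^ t) (Kpoly a (t + m))) (\<lambda>z. g (of_nat (t + m) * z))
     = zero_integral (Kpoly (\<lambda>j. a (t + j) * scaled_deriv_coeff m t j) m) g"
proof (cases "t + m = 0")
  case True
  then show ?thesis using degree_Kpoly_le[of _ 0] by (simp add: zero_integral_degree_0)
next
  case False
  define D where "D = (pderiv ^^ t) (Kpoly a (t + m))"
  define n :: complex where "n = of_nat (t + m)"
  have "n \<noteq> 0" using False of_nat_eq_0_iff[of "t + m"] unfolding n_def by (auto simp del: of_nat_add)
  have "Kpoly (\<lambda>j. a (t + j) * scaled_deriv_coeff m t j) m = smult (1 / fact t) (pcompose D [:0, 1 / n:])"
    using \<open>n \<noteq> 0\<close>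
    by (intro poly_eqI) (simp add: coeff_Kpoly coeff_pcompose_linear D_def coeff_higher_pderiv
        fact_add_eq_fact_mult_pochhammer scaled_deriv_coeff_def n_def power_divide field_simps add.commute)
  then have "zero_integral (Kpoly (\<lambda>j. a (t + j) * scaled_deriv_coeff m t j) m) g = zero_integral D (\<lambda>z. g (z / (1 / n)))"
    using \<open>n \<noteq> 0\<close> by (simp add: zero_integral_smult zero_integral_pcompose_scale)
  then show ?thesis by (simp add: D_def n_def mult.commute)
qed

lemma scaled_deriv_coeff_last_neq_0: "scaled_deriv_coeff m t m \<noteq> 0"
  by (cases "t + m = 0") (auto simp: scaled_deriv_coeff_def simp del: of_nat_add)

lemma scaled_deriv_coeff_tendsto: "(\<lambda>t. scaled_deriv_coeff m t j) \<longlonglongrightarrow> 1 / fact j"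
proof -
  define L where "L = (\<lambda>j t. fact (t + j) / (fact t * of_nat (t + m) ^ j) :: complex)"
  have ratio: "(\<lambda>t. of_nat (t + k) / of_nat (t + m) :: complex) \<longlonglongrightarrow> 1" for k
  proof -
    have "(\<lambda>t. real (t + k) / real (t + m)) \<longlonglongrightarrow> 1" by real_asymp
    then show ?thesis using tendsto_of_real[where 'a=complex] by fastforce
  qed
  have "(\<lambda>t. L j t) \<longlonglongrightarrow> 1" for j
  proof (induction j)
    case 0
    then show ?case by (simp add: L_def)
  next
    case (Suc j)
    have "L j t * (of_nat (t + Suc j) / of_nat (t + m)) = L (Suc j) t" for t
      by (simp add: L_def field_simps add_Suc_right del: of_nat_Suc)
    then show ?case using tendsto_mult[OF Suc ratio[of "Suc j"]] by simp
  qed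
  then have "(\<lambda>t. L j t / fact j) \<longlonglongrightarrow> 1 / fact j" by (intro tendsto_divide) auto
  then show ?thesis by (simp add: L_def scaled_deriv_coeff_def field_simps)
qed

lemma tendsto_zero_integral_scaled_Kpoly:
  assumes "b m \<noteq> 0" "continuous_convergence \<psi> \<psi>0"
  shows "(\<lambda>t. zero_integral (Kpoly (\<lambda>j. b j * scaled_deriv_coeff m t j) m) (\<psi> t))
           \<longlonglongrightarrow> zero_integral (fpoly b m) \<psi>0"
  unfolding fpoly_eq_Kpoly
proof (rule tendsto_zero_integral[where d=m])
  show "(\<lambda>t. coeff (Kpoly (\<lambda>j. b j * scaled_deriv_coeff m t j) m) k) \<longlonglongrightarrow> coeff (Kpoly (\<lambda>j. b j / fact j) m) k" for k
    using scaled_deriv_coeff_tendsto[of m k, THEN tendsto_mult_left[where c="b k"]] by (simp add: coeff_Kpoly)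
qed (use assms scaled_deriv_coeff_last_neq_0 in \<open>simp_all add: degree_Kpoly Kpoly_neq_0\<close>)

lemma continuous_convergence_rescale:
  fixes \<phi> :: "complex \<Rightarrow> real"
  assumes "isCont \<phi> 0"
  shows "continuous_convergence (\<lambda>t w. \<phi> (w / of_nat (t + m))) (\<lambda>_. \<phi> 0)"
  unfolding continuous_convergence_def
proof (intro allI impI)
  fix \<sigma> :: "nat \<Rightarrow> nat" and z :: "nat \<Rightarrow> complex" and w
  assume "strict_mono \<sigma>" "z \<longlonglongrightarrow> w"
  then have "strict_mono (\<lambda>n. \<sigma> n + m)" by (simp add: strict_mono_def)
  then have "(\<lambda>n. z n / of_nat (\<sigma> n + m)) \<longlonglongrightarrow> 0"
    by (intro tendsto_divide_0[OF \<open>z \<longlonglongrightarrow> w\<close>] filterlim_compose[OF tendsto_of_nat] filterlim_subseq)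
  then show "(\<lambda>n. \<phi> (z n / of_nat (\<sigma> n + m))) \<longlonglongrightarrow> \<phi> 0"
    using assms by (rule isCont_tendsto_compose[rotated])
qed

lemma tendsto_zero_integral_scaled_Kpoly_shrink:
  fixes \<phi> :: "complex \<Rightarrow> real"
  assumes "b m \<noteq> 0" "0 < m" "isCont \<phi> 0"
  shows "(\<lambda>t. zero_integral (Kpoly (\<lambda>j. b j * scaled_deriv_coeff m t j) m) (\<lambda>w. \<phi> (w / of_nat (t + m))) / real m)
           \<longlonglongrightarrow> \<phi> 0"
proof -
  have "(\<lambda>t. zero_integral (Kpoly (\<lambda>j. b j * scaled_deriv_coeff m t j) m) (\<lambda>w. \<phi> (w / of_nat (t + m))))
      \<longlonglongrightarrow> zero_integral (fpoly b m) (\<lambda>_. \<phi> 0)"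
    using assms(1,3) by (intro tendsto_zero_integral_scaled_Kpoly continuous_convergence_rescale)
  also have "zero_integral (fpoly b m) (\<lambda>_. \<phi> 0) = real m * \<phi> 0"
    using assms(1) by (simp add: zero_integral_const fpoly_eq_Kpoly degree_Kpoly Kpoly_neq_0)
  finally have "(\<lambda>t. zero_integral (Kpoly (\<lambda>j. b j * scaled_deriv_coeff m t j) m) (\<lambda>w. \<phi> (w / of_nat (t + m)))
      / real m) \<longlonglongrightarrow> real m * \<phi> 0 / real m"
    by (rule tendsto_divide) (use assms(2) in auto)
  also have "real m * \<phi> 0 / real m = \<phi> 0" using assms(2) by simp
  finally show ?thesis .
qed

lemma borel_measurable_zero_integral_scaled_Kpoly:
  assumes "continuous_on UNIV \<psi>"
  shows "(\<lambda>b. zero_integral (Kpoly (\<lambda>j. b j * c j) m) \<psi>) \<in> borel_measurable (borel :: (nat \<Rightarrow> complex) measure)"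
proof -
  have "continuous_on UNIV (\<lambda>b::nat \<Rightarrow> complex. \<lambda>j. b j * c j)"
    by (intro continuous_on_coordinatewise_then_product continuous_on_mult continuous_on_const
        continuous_on_product_coordinates)
  then have "(\<lambda>b::nat \<Rightarrow> complex. \<lambda>j. b j * c j) \<in> borel_measurable borel"
    by (rule borel_measurable_continuous_onI)
  from measurable_comp[OF this borel_measurable_zero_integral_Kpoly[OF assms, of m]] show ?thesis
    by (simp add: o_def)
qed

section \<open>Almost sure convergence and shifts of i.i.d. sequences\<close>

lemma (in prob_space) tendsto_measure_deviation_of_AE_tendsto:
  fixes Y :: "nat \<Rightarrow> 'a \<Rightarrow> real"
  assumes "\<And>t. Y t \<in> borel_measurable M" "AE \<omega> in M. (\<lambda>t. Y t \<omega>) \<longlonglongrightarrow> c" "\<epsilon> > 0"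
  shows "(\<lambda>t. measure M {\<omega>\<in>space M. \<bar>Y t \<omega> - c\<bar> > \<epsilon>}) \<longlonglongrightarrow> 0"
proof -
  define S where "S t = {\<omega>\<in>space M. \<bar>Y t \<omega> - c\<bar> > \<epsilon>}" for t
  have [measurable]: "Y t \<in> borel_measurable M" for t by (rule assms(1))
  have S: "S t \<in> sets M" for t unfolding S_def by measurable
  have "(\<lambda>t. integral\<^sup>L M (indicator (S t) :: 'a \<Rightarrow> real)) \<longlonglongrightarrow> integral\<^sup>L M (\<lambda>_. 0::real)"
  proof (rule integral_dominated_convergence[where w="\<lambda>_. 1"])
    show "AE \<omega> in M. (\<lambda>t. indicator (S t) \<omega> :: real) \<longlonglongrightarrow> 0"
      using assms(2)
    proof eventually_elim
      case (elim \<omega>)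
      then have "eventually (\<lambda>t. \<bar>Y t \<omega> - c\<bar> < \<epsilon>) sequentially"
        using assms(3) by (simp add: tendsto_iff dist_real_def)
      then have "eventually (\<lambda>t. indicator (S t) \<omega> = (0::real)) sequentially"
        by eventually_elim (auto simp: S_def indicator_def)
      then show ?case by (rule tendsto_eventually)
    qed
  qed (use S in \<open>auto simp: indicator_def\<close>)
  then show ?thesis using S by (simp add: S_def)
qed

lemma (in prob_space) weak_conv_m_of_AE_tendsto:
  fixes Y :: "nat \<Rightarrow> 'a \<Rightarrow> real"
  assumes "\<And>t. Y t \<in> borel_measurable M" "Z \<in> borel_measurable M"
    and "AE \<omega> in M. (\<lambda>t. Y t \<omega>) \<longlonglongrightarrow> Z \<omega>"
  shows "weak_conv_m (\<lambda>t. distr M borel (Y t)) (distr M borel Z)"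
proof (rule integral_bdd_continuous_conv_imp_weak_conv)
  fix f :: "real \<Rightarrow> real"
  assume cont: "\<And>x. isCont f x" and bdd: "\<And>x. \<bar>f x\<bar> \<le> 1"
  have [measurable]: "f \<in> borel_measurable borel"
    using cont by (intro borel_measurable_continuous_onI continuous_at_imp_continuous_on) auto
  have [measurable]: "Y t \<in> borel_measurable M" "Z \<in> borel_measurable M" for t by (fact assms)+
  have "(\<lambda>t. integral\<^sup>L M (\<lambda>x. f (Y t x))) \<longlonglongrightarrow> integral\<^sup>L M (\<lambda>x. f (Z x))"
  proof (rule integral_dominated_convergence[where w="\<lambda>_. 1"])
    show "AE x in M. (\<lambda>t. f (Y t x)) \<longlonglongrightarrow> f (Z x)"
      using assms(3) by eventually_elim (rule isCont_tendsto_compose[OF cont])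
  qed (use bdd in auto)
  then show "(\<lambda>t. integral\<^sup>L (distr M borel (Y t)) f) \<longlonglongrightarrow> integral\<^sup>L (distr M borel Z) f"
    by (simp add: integral_distr)
qed (use assms in auto)

lemma measure_Collect_eq_of_distr_eq:
  assumes "X \<in> borel_measurable M" "Y \<in> borel_measurable M" "distr M borel X = distr M borel Y"
    and "{x. P x} \<in> sets borel"
  shows "measure M {\<omega>\<in>space M. P (X \<omega>)} = measure M {\<omega>\<in>space M. P (Y \<omega>)}"
  using measure_distr[OF assms(1,4)] measure_distr[OF assms(2,4)] assms(3)
  by (simp add: vimage_def Int_def conj_commute)

lemma (in prob_space) AE_neq_of_distr_eq:
  fixes X Y :: "'a \<Rightarrow> 'b::t1_space"
  assumes "X \<in> borel_measurable M" "Y \<in> borel_measurable M" "distr M borel X = distr M borel Y"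
    and "measure M {\<omega>\<in>space M. Y \<omega> = c} = 0"
  shows "AE \<omega> in M. X \<omega> \<noteq> c"
proof -
  have "measure M {\<omega>\<in>space M. X \<omega> = c} = 0"
    using measure_Collect_eq_of_distr_eq[OF assms(1-3), of "\<lambda>x. x = c"] assms(4) by simp
  moreover have "{\<omega>\<in>space M. X \<omega> = c} \<in> sets M" using assms(1) by measurable
  ultimately show ?thesis by (simp add: AE_iff_measurable[OF _ refl] emeasure_eq_measure)
qed

lemma weak_conv_m_offset:
  assumes "weak_conv_m (\<lambda>t. \<mu> (t + k)) \<nu>"
  shows "weak_conv_m \<mu> \<nu>"
  using assms unfolding weak_conv_m_def weak_conv_def by (blast intro: LIMSEQ_offset)

locale iid_sequence = prob_space M for M :: "'a measure" +
  fixes \<xi> :: "nat \<Rightarrow> 'a \<Rightarrow> 'b::second_countable_topology"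
  assumes random_variable_\<xi>: "\<And>k. \<xi> k \<in> borel_measurable M"
    and indep_\<xi>: "indep_vars (\<lambda>_. borel) \<xi> UNIV"
    and distr_\<xi>: "\<And>k. distr M borel (\<xi> k) = distr M borel (\<xi> 0)"
begin

lemma borel_measurable_shift: "(\<lambda>\<omega> j. \<xi> (t + j) \<omega>) \<in> borel_measurable M"
  by (rule measurable_coordinatewise_then_product) (simp add: random_variable_\<xi>)

lemma distr_shift: "distr M borel (\<lambda>\<omega> j. \<xi> (t + j) \<omega>) = distr M borel (\<lambda>\<omega> j. \<xi> j \<omega>)"
proof -
  define D where "D = distr M borel (\<xi> 0)"
  define P where "P = (Pi\<^sub>M UNIV (\<lambda>_. borel) :: (nat \<Rightarrow> 'b) measure)"
  have "prob_space D" unfolding D_def using random_variable_\<xi> by (intro prob_space_distr) auto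
  have sets_P: "sets P = sets borel" unfolding P_def by (rule sets_PiM_equal_borel)
  have \<xi>_P: "(\<lambda>\<omega> j. \<xi> (s + j) \<omega>) \<in> measurable M P" for s
    unfolding P_def using random_variable_\<xi> by (intro measurable_PiM_single') auto
  have shift_P: "(\<lambda>x n. x (t + n)) \<in> measurable P P"
    unfolding P_def by (intro measurable_PiM_single') (auto intro: measurable_component_singleton)
  have law: "distr M P (\<lambda>\<omega> j. \<xi> j \<omega>) = Pi\<^sub>M UNIV (\<lambda>_. D)"
  proof -
    have "distr M (Pi\<^sub>M UNIV (\<lambda>_. borel)) (\<lambda>x. \<lambda>i\<in>UNIV. \<xi> i x) = Pi\<^sub>M UNIV (\<lambda>i. distr M borel (\<xi> i))"
      using indep_\<xi> by (subst indep_vars_iff_distr_eq_PiM[symmetric]) (auto simp: random_variable_\<xi>)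
    also have "\<dots> = Pi\<^sub>M UNIV (\<lambda>_. D)" unfolding D_def by (intro PiM_cong refl) (rule distr_\<xi>)
    finally show ?thesis by (simp add: P_def restrict_def)
  qed
  have "distr M P (\<lambda>\<omega> j. \<xi> (t + j) \<omega>) = distr (distr M P (\<lambda>\<omega> j. \<xi> j \<omega>)) P (\<lambda>x n. x (t + n))"
    using \<xi>_P[of 0] shift_P by (subst distr_distr) (auto simp: o_def)
  also have "\<dots> = distr (Pi\<^sub>M UNIV (\<lambda>_. D)) (Pi\<^sub>M UNIV (\<lambda>_. D)) (\<lambda>\<omega>. \<lambda>n\<in>UNIV. \<omega> (t + n))"
    unfolding law by (intro distr_cong) (auto simp: P_def D_def intro!: sets_PiM_cong)
  also have "\<dots> = Pi\<^sub>M UNIV (\<lambda>_. D)"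
    using distr_PiM_reindex[of UNIV "\<lambda>_. D" "\<lambda>n. t + n" UNIV] \<open>prob_space D\<close> by (simp add: inj_on_def)
  also have "\<dots> = distr M P (\<lambda>\<omega> j. \<xi> j \<omega>)" by (rule law[symmetric])
  finally have "distr M P (\<lambda>\<omega> j. \<xi> (t + j) \<omega>) = distr M P (\<lambda>\<omega> j. \<xi> j \<omega>)" .
  moreover have "distr M borel f = distr M P f" for f :: "'a \<Rightarrow> nat \<Rightarrow> 'b"
    using sets_P by (intro distr_cong) auto
  ultimately show ?thesis by simp
qed

lemma distr_comp_shift:
  assumes "H \<in> borel \<rightarrow>\<^sub>M N"
  shows "distr M N (\<lambda>\<omega>. H (\<lambda>j. \<xi> (t + j) \<omega>)) = distr M N (\<lambda>\<omega>. H (\<lambda>j. \<xi> j \<omega>))"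
  using distr_distr[OF assms borel_measurable_shift[of t]] distr_distr[OF assms borel_measurable_shift[of 0]]
  by (simp add: distr_shift o_def)

end

lemma test_fun_continuous: "test_fun \<phi> \<Longrightarrow> continuous_on UNIV \<phi>"
  unfolding test_fun_def smooth_fun_def by (metis empty_subsetI list.set(1) pderivs.simps(1))

lemma random_variable_zero_integral_scaled_Kpoly:
  assumes "\<And>k. \<xi> k \<in> borel_measurable M" "continuous_on UNIV \<psi>"
  shows "(\<lambda>\<omega>. zero_integral (Kpoly (\<lambda>j. \<xi> j \<omega> * c j) m) \<psi>) \<in> borel_measurable M"
  using measurable_comp[OF measurable_coordinatewise_then_product[of "\<lambda>\<omega> j. \<xi> j \<omega>"]
      borel_measurable_zero_integral_scaled_Kpoly[OF assms(2)]] assms(1)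
  by (simp add: o_def)

lemma distr_zero_integral_higher_pderiv_Kpoly:
  fixes \<xi> :: "nat \<Rightarrow> 'a \<Rightarrow> complex"
  assumes "iid_sequence M \<xi>" "continuous_on UNIV \<psi>"
  shows "distr M borel (\<lambda>\<omega>. zero_integral ((pderiv ^^ t) (Kpoly (\<lambda>k. \<xi> k \<omega>) (t + m))) (\<lambda>z. \<psi> (of_nat (t + m) * z)))
       = distr M borel (\<lambda>\<omega>. zero_integral (Kpoly (\<lambda>j. \<xi> j \<omega> * scaled_deriv_coeff m t j) m) \<psi>)"
  using iid_sequence.distr_comp_shift[OF assms(1) borel_measurable_zero_integral_scaled_Kpoly[OF assms(2)]]
  by (simp add: zero_integral_higher_pderiv_Kpoly_rescale del: of_nat_add)

lemma random_variable_zero_integral_higher_pderiv_Kpoly: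
  assumes "\<And>k. \<xi> k \<in> borel_measurable M" "continuous_on UNIV \<psi>"
  shows "(\<lambda>\<omega>. zero_integral ((pderiv ^^ t) (Kpoly (\<lambda>k. \<xi> k \<omega>) (t + m))) (\<lambda>z. \<psi> (of_nat (t + m) * z)))
           \<in> borel_measurable M"
  using random_variable_zero_integral_scaled_Kpoly[of "\<lambda>k. \<xi> (t + k)", OF assms(1) assms(2)]
  by (simp add: zero_integral_higher_pderiv_Kpoly_rescale del: of_nat_add)

lemma zeros_of_higher_pderiv_Kpoly_concentrate:
  fixes \<xi> :: "nat \<Rightarrow> 'a \<Rightarrow> complex"
  assumes "iid_sequence M \<xi>" "AE \<omega> in M. \<xi> m \<omega> \<noteq> 0" "0 < m" "continuous_on UNIV \<phi>" "\<epsilon> > 0"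
  shows "(\<lambda>n. measure M {\<omega> \<in> space M.
            \<bar>zero_integral ((pderiv ^^ (n - m)) (Kpoly (\<lambda>k. \<xi> k \<omega>) n)) \<phi> / real m - \<phi> 0\<bar> > \<epsilon>})
         \<longlonglongrightarrow> 0"
proof -
  interpret iid_sequence M \<xi> by fact
  define \<psi> where "\<psi> = (\<lambda>t w. \<phi> (w / of_nat (t + m)))"
  define Z where "Z = (\<lambda>t \<omega>. zero_integral (Kpoly (\<lambda>j. \<xi> j \<omega> * scaled_deriv_coeff m t j) m) (\<psi> t))"
  have cont_\<psi>: "continuous_on UNIV (\<psi> t)" for t
    unfolding \<psi>_def divide_inverse by (rule continuous_on_compose2[OF assms(4)]) (auto intro!: continuous_intros)
  have Z: "Z t \<in> borel_measurable M" for t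
    unfolding Z_def by (rule random_variable_zero_integral_scaled_Kpoly[OF random_variable_\<xi> cont_\<psi>])
  have "isCont \<phi> 0" using assms(4) by (simp add: continuous_on_eq_continuous_at)
  have "AE \<omega> in M. (\<lambda>t. Z t \<omega> / real m) \<longlonglongrightarrow> \<phi> 0"
    using assms(2) unfolding Z_def \<psi>_def
    by eventually_elim (intro tendsto_zero_integral_scaled_Kpoly_shrink assms(3) \<open>isCont \<phi> 0\<close>)
  then have lim: "(\<lambda>t. measure M {\<omega>\<in>space M. \<bar>Z t \<omega> / real m - \<phi> 0\<bar> > \<epsilon>}) \<longlonglongrightarrow> 0"
    using Z by (intro tendsto_measure_deviation_of_AE_tendsto assms(5) borel_measurable_divide) auto
  have dev_eq: "measure M {\<omega> \<in> space M.
        \<bar>zero_integral ((pderiv ^^ (t + m - m)) (Kpoly (\<lambda>k. \<xi> k \<omega>) (t + m))) \<phi> / real m - \<phi> 0\<bar> > \<epsilon>}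
      = measure M {\<omega>\<in>space M. \<bar>Z t \<omega> / real m - \<phi> 0\<bar> > \<epsilon>}" for t
  proof (rule measure_Collect_eq_of_distr_eq[where P="\<lambda>x. \<bar>x / real m - \<phi> 0\<bar> > \<epsilon>"])
    have \<psi>_rescale: "(\<lambda>z. \<psi> t (of_nat (t + m) * z)) = \<phi>"
      using assms(3) by (auto simp: \<psi>_def simp del: of_nat_add)
    show "(\<lambda>\<omega>. zero_integral ((pderiv ^^ (t + m - m)) (Kpoly (\<lambda>k. \<xi> k \<omega>) (t + m))) \<phi>) \<in> borel_measurable M"
      using random_variable_zero_integral_higher_pderiv_Kpoly[where \<xi>=\<xi> and \<psi>="\<psi> t" and t=t and m=m,
          OF random_variable_\<xi> cont_\<psi>]
      unfolding \<psi>_rescale by (simp only: diff_add_inverse2)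
    show "distr M borel (\<lambda>\<omega>. zero_integral ((pderiv ^^ (t + m - m)) (Kpoly (\<lambda>k. \<xi> k \<omega>) (t + m))) \<phi>)
        = distr M borel (Z t)"
      using distr_zero_integral_higher_pderiv_Kpoly[where \<psi>="\<psi> t" and t=t and m=m, OF assms(1) cont_\<psi>]
      unfolding \<psi>_rescale by (simp only: Z_def diff_add_inverse2)
    show "{x. \<bar>x / real m - \<phi> 0\<bar> > \<epsilon>} \<in> sets borel" by measurable
  qed (rule Z)
  show ?thesis by (rule LIMSEQ_offset[where k=m]) (simp only: dev_eq lim)
qed

lemma weak_conv_m_zeros_of_rescaled_higher_pderiv_Kpoly:
  fixes \<xi> :: "nat \<Rightarrow> 'a \<Rightarrow> complex"
  assumes "iid_sequence M \<xi>" "AE \<omega> in M. \<xi> m \<omega> \<noteq> 0" "continuous_on UNIV \<phi>"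
  shows "weak_conv_m
           (\<lambda>n. distr M borel (\<lambda>\<omega>. zero_integral ((pderiv ^^ (n - m)) (Kpoly (\<lambda>k. \<xi> k \<omega>) n)) (\<lambda>z. \<phi> (of_nat n * z))))
           (distr M borel (\<lambda>\<omega>. zero_integral (fpoly (\<lambda>k. \<xi> k \<omega>) m) \<phi>))"
proof -
  interpret iid_sequence M \<xi> by fact
  define Y where "Y = (\<lambda>t \<omega>. zero_integral (Kpoly (\<lambda>j. \<xi> j \<omega> * scaled_deriv_coeff m t j) m) \<phi>)"
  have wc: "weak_conv_m (\<lambda>t. distr M borel (Y t)) (distr M borel (\<lambda>\<omega>. zero_integral (fpoly (\<lambda>k. \<xi> k \<omega>) m) \<phi>))"
  proof (rule weak_conv_m_of_AE_tendsto)
    show "Y t \<in> borel_measurable M" for t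
      unfolding Y_def by (rule random_variable_zero_integral_scaled_Kpoly[OF random_variable_\<xi> assms(3)])
    show "(\<lambda>\<omega>. zero_integral (fpoly (\<lambda>k. \<xi> k \<omega>) m) \<phi>) \<in> borel_measurable M"
      using random_variable_zero_integral_scaled_Kpoly[OF random_variable_\<xi> assms(3), where c="\<lambda>j. 1 / fact j" and m=m]
      by (simp add: fpoly_eq_Kpoly)
    show "AE \<omega> in M. (\<lambda>t. Y t \<omega>) \<longlonglongrightarrow> zero_integral (fpoly (\<lambda>k. \<xi> k \<omega>) m) \<phi>"
      using assms(2) unfolding Y_def
      by eventually_elim (intro tendsto_zero_integral_scaled_Kpoly continuous_convergence_const assms(3))
  qed
  have law: "distr M borel (\<lambda>\<omega>. zero_integral ((pderiv ^^ (t + m - m)) (Kpoly (\<lambda>k. \<xi> k \<omega>) (t + m)))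
        (\<lambda>z. \<phi> (of_nat (t + m) * z))) = distr M borel (Y t)" for t
    using distr_zero_integral_higher_pderiv_Kpoly[OF assms(1,3), of t m] by (simp only: Y_def diff_add_inverse2)
  show ?thesis by (rule weak_conv_m_offset[where k=m]) (simp only: law wc)
qed

theorem theorem4:
  fixes M :: "'a measure" and \<xi> :: "nat \<Rightarrow> 'a \<Rightarrow> complex" and m :: nat
  assumes "prob_space M"
    and "\<And>k. \<xi> k \<in> borel_measurable M"
    and "prob_space.indep_vars M (\<lambda>_. borel) \<xi> UNIV"
    and "\<And>k. distr M borel (\<xi> k) = distr M borel (\<xi> 0)"
    and "\<not> (\<exists>c. measure M {\<omega> \<in> space M. \<xi> 0 \<omega> = c} = 1)"
    and "measure M {\<omega> \<in> space M. \<xi> 0 \<omega> = 0} = 0"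
    and "integrable M (\<lambda>\<omega>. ln (1 + cmod (\<xi> 0 \<omega>)))"
    and "0 < m"
  shows "(\<forall>\<phi>. test_fun \<phi> \<longrightarrow> (\<forall>\<epsilon>>0.
            (\<lambda>n. measure M {\<omega> \<in> space M.
               \<bar>zero_integral ((pderiv ^^ (n - m)) (Kpoly (\<lambda>k. \<xi> k \<omega>) n)) \<phi> / real m - \<phi> 0\<bar> > \<epsilon>})
            \<longlonglongrightarrow> 0))
       \<and> (\<forall>\<phi>. test_fun \<phi> \<longrightarrow>
            weak_conv_m
              (\<lambda>n. distr M borel (\<lambda>\<omega>.
                 zero_integral ((pderiv ^^ (n - m)) (Kpoly (\<lambda>k. \<xi> k \<omega>) n)) (\<lambda>z. \<phi> (of_nat n * z))))
              (distr M borel (\<lambda>\<omega>. zero_integral (fpoly (\<lambda>k. \<xi> k \<omega>) m) \<phi>)))"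
proof -
  interpret prob_space M by fact
  have iid: "iid_sequence M \<xi>"
    using assms(1-4) by (simp add: iid_sequence_def iid_sequence_axioms_def)
  have nonzero: "AE \<omega> in M. \<xi> m \<omega> \<noteq> 0"
    using assms(2,4,6) by (intro AE_neq_of_distr_eq) auto
  show ?thesis
  proof (intro conjI allI impI)
    fix \<phi> :: "complex \<Rightarrow> real" and \<epsilon> :: real
    assume "test_fun \<phi>" "\<epsilon> > 0"
    show "(\<lambda>n. measure M {\<omega> \<in> space M.
               \<bar>zero_integral ((pderiv ^^ (n - m)) (Kpoly (\<lambda>k. \<xi> k \<omega>) n)) \<phi> / real m - \<phi> 0\<bar> > \<epsilon>})
            \<longlonglongrightarrow> 0"
      using test_fun_continuous[OF \<open>test_fun \<phi>\<close>] \<open>\<epsilon> > 0\<close>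
      by (rule zeros_of_higher_pderiv_Kpoly_concentrate[OF iid nonzero assms(8)])
  next
    fix \<phi> :: "complex \<Rightarrow> real"
    assume "test_fun \<phi>"
    show "weak_conv_m
              (\<lambda>n. distr M borel (\<lambda>\<omega>.
                 zero_integral ((pderiv ^^ (n - m)) (Kpoly (\<lambda>k. \<xi> k \<omega>) n)) (\<lambda>z. \<phi> (of_nat n * z))))
              (distr M borel (\<lambda>\<omega>. zero_integral (fpoly (\<lambda>k. \<xi> k \<omega>) m) \<phi>))"
      using test_fun_continuous[OF \<open>test_fun \<phi>\<close>]
      by (rule weak_conv_m_zeros_of_rescaled_higher_pderiv_Kpoly[OF iid nonzero])
  qed
qed

end
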